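(* Let $G=K(n_1,\dots,n_s)$ be a complete $s$-partite graph ($s\ge 2$) with parts $V_1,\dots,V_s$, $|V_j|=n_j$, and suppose at least one part has at least $6$ vertices. Then there exist an optimal $3$-relaxed coloring $f$ of $G$ and a part $V_j$ with $n_j\ge 6$ such that $|f(V_j)|=1$.
   Context: A map $f$ from $V(G)$ to a finite set of colors is a $3$-relaxed coloring if every vertex $u$ has at most $3$ neighbors $v$ with $f(v)=f(u)$; $\chi_3(G)$ is the minimum number of colors in such a coloring, and a $3$-relaxed coloring using $\chi_3(G)$ colors is optimal. $f(S)$ denotes the set of colors used on $S$. *)

theory Defs
  imports Main
begin

text \<open>Simple graphs are given by a vertex set V and a symmetric irreflexive
adjacency relation E. Colours are natural numbers; the number of colours used
by f is card (f ` V).\<close>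

definition relaxed_coloring :: "nat \<Rightarrow> 'a set \<Rightarrow> ('a \<Rightarrow> 'a \<Rightarrow> bool) \<Rightarrow> ('a \<Rightarrow> nat) \<Rightarrow> bool" where
  "relaxed_coloring k V E f \<longleftrightarrow> (\<forall>u\<in>V. card {v\<in>V. E u v \<and> f v = f u} \<le> k)"

definition relaxed_chromatic :: "nat \<Rightarrow> 'a set \<Rightarrow> ('a \<Rightarrow> 'a \<Rightarrow> bool) \<Rightarrow> nat" where
  "relaxed_chromatic k V E = (LEAST m. \<exists>f. relaxed_coloring k V E f \<and> card (f ` V) = m)"

definition optimal_relaxed_coloring :: "nat \<Rightarrow> 'a set \<Rightarrow> ('a \<Rightarrow> 'a \<Rightarrow> bool) \<Rightarrow> ('a \<Rightarrow> nat) \<Rightarrow> bool" where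
  "optimal_relaxed_coloring k V E f \<longleftrightarrow>
     relaxed_coloring k V E f \<and> card (f ` V) = relaxed_chromatic k V E"

text \<open>Complete s-partite graph K(n_0,...,n_{s-1}): vertex (j,i) is the i-th vertex
of part j; parts are V_j = {(j,i). i < n j}.\<close>

definition cmp_vertices :: "nat \<Rightarrow> (nat \<Rightarrow> nat) \<Rightarrow> (nat \<times> nat) set" where
  "cmp_vertices s n = {(j, i). j < s \<and> i < n j}"

definition cmp_part :: "(nat \<Rightarrow> nat) \<Rightarrow> nat \<Rightarrow> (nat \<times> nat) set" where
  "cmp_part n j = {(j, i) | i. i < n j}"

definition cmp_adj :: "nat \<times> nat \<Rightarrow> nat \<times> nat \<Rightarrow> bool" where
  "cmp_adj u v \<longleftrightarrow> fst u \<noteq> fst v"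

end

theory Submission
  imports Defs
begin

text \<open>Start from an optimal coloring f and recolor it, using only colors of f, so that a part P
with at least 6 vertices becomes monochromatic; the result is again optimal. As P is independent,
it suffices to recolor V - P, keeping it 3-relaxed, so that some color a of f(P) no longer occurs
outside P, and then to give all of P the color a.
If some color of f(P) does not occur outside P, nothing needs to be recolored. Otherwise let W be
the set of vertices outside P with a color in f(P). If |W| \<le> 4(|f(P)| - 1), recolor W with the
colors of f(P) other than a, at most 4 vertices per color. If W is larger, every color class of a
color in f(P) meets two parts and so has at most 6 vertices, and counting |P| + |W| yields two
colors a \<noteq> b in f(P) whose classes have at least 5 vertices. Such a class meets no third part,
so outside P it consists of at most 3 vertices of a single part, and renaming a to b outside P
keeps the coloring 3-relaxed.\<close>

lemma exists_map_with_small_fibres: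
  assumes "finite C" "finite W" "card W \<le> m * card C"
  shows "\<exists>\<phi>. \<phi> ` W \<subseteq> C \<and> (\<forall>c. card {w\<in>W. \<phi> w = c} \<le> m)"
  using assms
proof (induction C arbitrary: W rule: finite_induct)
  case empty
  then show ?case by auto
next
  case (insert c C W)
  obtain B where B: "B \<subseteq> W" "card B = min m (card W)" "finite B"
    using obtain_subset_with_card_n[of "min m (card W)" W] by auto
  have "card (W - B) \<le> m * card C"
    using insert B by (simp add: card_Diff_subset)
  then obtain \<phi> where \<phi>: "\<phi> ` (W - B) \<subseteq> C" "\<forall>x. card {w\<in>W - B. \<phi> w = x} \<le> m"
    using insert.IH insert.prems(1) by blast
  define \<psi> where "\<psi> w = (if w \<in> B then c else \<phi> w)" for w
  have "card {w\<in>W. \<psi> w = x} \<le> m" for x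
  proof (cases "x = c")
    case True
    then have "{w\<in>W. \<psi> w = x} \<subseteq> B"
      using \<phi>(1) insert.hyps(2) by (auto simp: \<psi>_def)
    then show ?thesis using B by (metis card_mono min.bounded_iff)
  next
    case False
    then have "{w\<in>W. \<psi> w = x} = {w\<in>W - B. \<phi> w = x}"
      by (auto simp: \<psi>_def)
    then show ?thesis using \<phi>(2) by simp
  qed
  moreover have "\<psi> ` W \<subseteq> insert c C"
    using \<phi>(1) by (auto simp: \<psi>_def)
  ultimately show ?case by blast
qed

lemma two_elements_exceeding_if_sum_large:
  fixes g :: "'a \<Rightarrow> nat"
  assumes "finite A" and bounded: "\<forall>c\<in>A. g c \<le> h" and large: "l * card A + (h - l) < sum g A"
  shows "\<exists>a\<in>A. \<exists>b\<in>A. a \<noteq> b \<and> l < g a \<and> l < g b"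
proof (rule ccontr)
  assume no_two: "\<not> (\<exists>a\<in>A. \<exists>b\<in>A. a \<noteq> b \<and> l < g a \<and> l < g b)"
  define T where "T = {c\<in>A. l < g c}"
  have "T \<subseteq> A" "finite T" using \<open>finite A\<close> by (auto simp: T_def)
  have "card T \<le> 1"
    unfolding One_nat_def card_le_Suc0_iff_eq[OF \<open>finite T\<close>] using no_two by (auto simp: T_def)
  have "sum g A = sum g (A - T) + sum g T"
    using \<open>T \<subseteq> A\<close> \<open>finite A\<close> by (rule sum.subset_diff)
  also have "sum g (A - T) \<le> card (A - T) * l"
    using sum_bounded_above[of "A - T" g l] by (simp add: T_def not_less)
  also have "sum g T \<le> card T * h"
    using sum_bounded_above[of T g h] bounded \<open>T \<subseteq> A\<close> by auto
  also have "card (A - T) = card A - card T"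
    using \<open>finite T\<close> \<open>T \<subseteq> A\<close> by (rule card_Diff_subset)
  finally have "sum g A \<le> l * (card A - card T) + h * card T" by (simp add: mult.commute)
  moreover have "card T \<le> card A"
    using \<open>finite A\<close> \<open>T \<subseteq> A\<close> by (rule card_mono)
  moreover have "l * (card A - 1) = l * card A - l" "l * 1 \<le> l * card A" if "1 \<le> card A"
    using that by (simp_all add: diff_mult_distrib2)
  moreover have "card T = 0 \<or> card T = 1" using \<open>card T \<le> 1\<close> by linarith
  ultimately show False using large by auto
qed

lemma sum_card_color_classes:
  assumes "finite V" "finite A"
  shows "(\<Sum>c\<in>A. card {v\<in>V. f v = c}) = card {v\<in>V. f v \<in> A}"
proof -
  have "{v\<in>V. f v \<in> A} = (\<Union>c\<in>A. {v\<in>V. f v = c})" by auto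
  also have "card \<dots> = (\<Sum>c\<in>A. card {v\<in>V. f v = c})"
    using assms by (intro card_UN_disjoint) auto
  finally show ?thesis by simp
qed

lemma relaxed_coloring_subset:
  assumes "relaxed_coloring k V E f" "U \<subseteq> V" "finite V"
  shows "relaxed_coloring k U E f"
  unfolding relaxed_coloring_def
proof
  fix u assume "u \<in> U"
  have "card {v\<in>U. E u v \<and> f v = f u} \<le> card {v\<in>V. E u v \<and> f v = f u}"
    using assms(2,3) by (intro card_mono) auto
  also have "\<dots> \<le> k"
    using assms(1,2) \<open>u \<in> U\<close> by (auto simp: relaxed_coloring_def)
  finally show "card {v\<in>U. E u v \<and> f v = f u} \<le> k" .
qed

lemma relaxed_coloring_extend_independent:
  assumes h: "relaxed_coloring k (V - P) E h"
    and indep: "\<forall>u\<in>P. \<forall>v\<in>P. \<not> E u v"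
    and fresh: "a \<notin> h ` (V - P)"
  shows "relaxed_coloring k V E (\<lambda>v. if v \<in> P then a else h v)"
  unfolding relaxed_coloring_def
proof
  fix u assume u: "u \<in> V"
  let ?g = "\<lambda>v. if v \<in> P then a else h v"
  show "card {v\<in>V. E u v \<and> ?g v = ?g u} \<le> k"
  proof (cases "u \<in> P")
    case True
    then have "{v\<in>V. E u v \<and> ?g v = ?g u} = {}"
      using indep fresh by auto
    then show ?thesis by (metis card.empty le0)
  next
    case False
    then have "{v\<in>V. E u v \<and> ?g v = ?g u} = {v\<in>V - P. E u v \<and> h v = h u}"
      using fresh u by auto
    then show ?thesis
      using h u False by (simp add: relaxed_coloring_def)
  qed
qed

lemma relaxed_coloring_merge_colors:
  assumes f: "relaxed_coloring k V E f"
    and sparse: "\<forall>u\<in>S. card {v\<in>S. E u v} \<le> k"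
    and S: "S = {v\<in>V. f v = a \<or> f v = b}"
  shows "relaxed_coloring k V E (\<lambda>v. if f v = a then b else f v)"
  unfolding relaxed_coloring_def
proof
  fix u assume u: "u \<in> V"
  let ?g = "\<lambda>v. if f v = a then b else f v"
  show "card {v\<in>V. E u v \<and> ?g v = ?g u} \<le> k"
  proof (cases "u \<in> S")
    case True
    then have "{v\<in>V. E u v \<and> ?g v = ?g u} = {v\<in>S. E u v}"
      using S by auto
    then show ?thesis using sparse True by simp
  next
    case False
    then have "{v\<in>V. E u v \<and> ?g v = ?g u} = {v\<in>V. E u v \<and> f v = f u}"
      using S u by auto
    then show ?thesis using f u by (simp add: relaxed_coloring_def)
  qed
qed

lemma relaxed_coloring_recolor_small_fibres:
  assumes h: "relaxed_coloring k V E h" and "finite V" and "W \<subseteq> V"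
    and irrefl: "\<forall>u. \<not> E u u"
    and fresh: "\<phi> ` W \<inter> h ` (V - W) = {}"
    and fibres: "\<forall>c. card {w\<in>W. \<phi> w = c} \<le> Suc k"
  shows "relaxed_coloring k V E (\<lambda>v. if v \<in> W then \<phi> v else h v)"
  unfolding relaxed_coloring_def
proof
  fix u assume u: "u \<in> V"
  let ?g = "\<lambda>v. if v \<in> W then \<phi> v else h v"
  have finW: "finite W" using \<open>finite V\<close> \<open>W \<subseteq> V\<close> finite_subset by blast
  show "card {v\<in>V. E u v \<and> ?g v = ?g u} \<le> k"
  proof (cases "u \<in> W")
    case True
    then have "{v\<in>V. E u v \<and> ?g v = ?g u} \<subseteq> {w\<in>W. \<phi> w = \<phi> u} - {u}"
      using fresh irrefl by auto
    then have "card {v\<in>V. E u v \<and> ?g v = ?g u} \<le> card ({w\<in>W. \<phi> w = \<phi> u} - {u})"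
      using finW by (intro card_mono) auto
    also have "\<dots> = card {w\<in>W. \<phi> w = \<phi> u} - 1"
      using True finW by simp
    also have "\<dots> \<le> k" using fibres by (metis diff_Suc_1 diff_le_mono)
    finally show ?thesis .
  next
    case False
    then have "{v\<in>V. E u v \<and> ?g v = ?g u} \<subseteq> {v\<in>V. E u v \<and> h v = h u}"
      using fresh u by auto
    then have "card {v\<in>V. E u v \<and> ?g v = ?g u} \<le> card {v\<in>V. E u v \<and> h v = h u}"
      using \<open>finite V\<close> by (intro card_mono) auto
    also have "\<dots> \<le> k" using h u by (simp add: relaxed_coloring_def)
    finally show ?thesis .
  qed
qed

lemma exists_recoloring_avoiding_by_blocks:
  assumes f: "relaxed_coloring k V E f" and "finite V" and irrefl: "\<forall>u. \<not> E u u"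
    and "P \<subseteq> V" and a: "a \<in> f ` P"
    and few: "card {v\<in>V - P. f v \<in> f ` P} \<le> Suc k * (card (f ` P) - 1)"
  shows "\<exists>h. relaxed_coloring k (V - P) E h \<and> h ` (V - P) \<subseteq> f ` V \<and> a \<notin> h ` (V - P)"
proof -
  define W where "W = {v\<in>V - P. f v \<in> f ` P}"
  have "finite (f ` P)" "finite W"
    using \<open>finite V\<close> \<open>P \<subseteq> V\<close> finite_subset by (auto simp: W_def)
  moreover have "card (f ` P - {a}) = card (f ` P) - 1"
    using a \<open>finite (f ` P)\<close> by simp
  ultimately obtain \<phi> where \<phi>: "\<phi> ` W \<subseteq> f ` P - {a}" "\<forall>c. card {w\<in>W. \<phi> w = c} \<le> Suc k"
    using exists_map_with_small_fibres[of "f ` P - {a}" W "Suc k"] few by (auto simp: W_def)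
  define h where "h v = (if v \<in> W then \<phi> v else f v)" for v
  have "relaxed_coloring k (V - P) E f"
    by (rule relaxed_coloring_subset[OF f _ \<open>finite V\<close>]) auto
  moreover have "f ` (V - P - W) \<inter> f ` P = {}"
    by (auto simp: W_def)
  then have "\<phi> ` W \<inter> f ` (V - P - W) = {}"
    using \<phi>(1) by blast
  ultimately have "relaxed_coloring k (V - P) E h"
    unfolding h_def using \<open>finite V\<close> irrefl \<phi>(2)
    by (intro relaxed_coloring_recolor_small_fibres) (auto simp: W_def)
  moreover have "h ` (V - P) \<subseteq> f ` V"
    using \<phi>(1) \<open>P \<subseteq> V\<close> by (auto simp: h_def)
  moreover have "a \<notin> h ` (V - P)"
  proof
    assume "a \<in> h ` (V - P)"
    then obtain v where v: "v \<in> V - P" "h v = a" by blast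
    show False
    proof (cases "v \<in> W")
      case True
      then show False using v \<phi>(1) by (auto simp: h_def)
    next
      case False
      then show False using v a by (auto simp: h_def W_def)
    qed
  qed
  ultimately show ?thesis by blast
qed

lemma optimal_relaxed_coloring_exists:
  assumes "relaxed_coloring k V E f"
  shows "\<exists>g. optimal_relaxed_coloring k V E g"
  using LeastI_ex[of "\<lambda>m. \<exists>f. relaxed_coloring k V E f \<and> card (f ` V) = m"] assms
  unfolding optimal_relaxed_coloring_def relaxed_chromatic_def by blast

lemma optimal_relaxed_coloring_if_colors_subset:
  assumes f: "optimal_relaxed_coloring k V E f" and g: "relaxed_coloring k V E g"
    and "finite V" and "g ` V \<subseteq> f ` V"
  shows "optimal_relaxed_coloring k V E g"
proof -
  have "card (g ` V) \<le> card (f ` V)"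
    using \<open>finite V\<close> \<open>g ` V \<subseteq> f ` V\<close> by (simp add: card_mono)
  moreover have "relaxed_chromatic k V E \<le> card (g ` V)"
    unfolding relaxed_chromatic_def by (rule Least_le) (use g in blast)
  ultimately show ?thesis
    using f g by (simp add: optimal_relaxed_coloring_def)
qed

lemma relaxed_coloring_cmp_adj_iff:
  "relaxed_coloring k V cmp_adj f \<longleftrightarrow> (\<forall>u\<in>V. card {v\<in>V. fst u \<noteq> fst v \<and> f v = f u} \<le> k)"
  by (simp add: relaxed_coloring_def cmp_adj_def)

lemma relaxed_coloring_fst: "relaxed_coloring k V cmp_adj fst"
proof -
  have "{v\<in>V. cmp_adj u v \<and> fst v = fst u} = {}" for u by (auto simp: cmp_adj_def)
  then show ?thesis unfolding relaxed_coloring_def by (metis card.empty le0)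
qed

lemma card_color_class_two_parts:
  assumes f: "relaxed_coloring k V cmp_adj f" and "finite V"
    and "x \<in> V" "y \<in> V" "f x = c" "f y = c" "fst x \<noteq> fst y"
  shows "card {v\<in>V. f v = c} \<le> 2 * k"
proof -
  let ?away = "\<lambda>u. {v\<in>V. fst u \<noteq> fst v \<and> f v = f u}"
  have "{v\<in>V. f v = c} \<subseteq> ?away x \<union> ?away y" using assms(5-7) by auto
  then have "card {v\<in>V. f v = c} \<le> card (?away x \<union> ?away y)"
    using \<open>finite V\<close> by (intro card_mono) auto
  also have "\<dots> \<le> card (?away x) + card (?away y)"
    by (rule card_Un_le)
  finally have "card {v\<in>V. f v = c} \<le> card (?away x) + card (?away y)" .
  moreover have "card (?away x) \<le> k" "card (?away y) \<le> k"
    using f assms(3,4) by (simp_all add: relaxed_coloring_cmp_adj_iff)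
  ultimately show ?thesis by linarith
qed

lemma card_color_class_three_parts:
  assumes f: "relaxed_coloring k V cmp_adj f" and "finite V"
    and "x \<in> V" "y \<in> V" "z \<in> V" "f x = c" "f y = c" "f z = c"
    and "fst x \<noteq> fst y" "fst x \<noteq> fst z" "fst y \<noteq> fst z"
  shows "2 * card {v\<in>V. f v = c} \<le> 3 * k"
proof -
  let ?C = "{v\<in>V. f v = c}"
  let ?away = "\<lambda>u. {v\<in>V. fst u \<noteq> fst v \<and> f v = f u}"
  have fin: "finite (?away u)" for u using \<open>finite V\<close> by simp
  have "card (?away x) + card (?away y) = card (?away x \<union> ?away y) + card (?away x \<inter> ?away y)"
    by (intro card_Un_Int fin)
  also have "?away x \<union> ?away y = ?C" using assms(6,7,9) by auto
  finally have xy: "card (?away x) + card (?away y) = card ?C + card (?away x \<inter> ?away y)" .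
  \<comment> \<open>a vertex of the class in the part of z lies in neither the part of x nor that of y\<close>
  have "?C \<subseteq> (?away x \<inter> ?away y) \<union> ?away z"
    using assms(6-11) by auto
  then have "card ?C \<le> card ((?away x \<inter> ?away y) \<union> ?away z)"
    using fin by (intro card_mono) auto
  also have "\<dots> \<le> card (?away x \<inter> ?away y) + card (?away z)"
    by (rule card_Un_le)
  finally have "card ?C \<le> card (?away x \<inter> ?away y) + card (?away z)" .
  moreover have "card (?away x) \<le> k" "card (?away y) \<le> k" "card (?away z) \<le> k"
    using f assms(3-5) by (simp_all add: relaxed_coloring_cmp_adj_iff)
  ultimately show ?thesis using xy by linarith
qed

lemma large_color_class_outside_part:
  assumes f: "relaxed_coloring k V cmp_adj f" and "finite V"
    and u: "u \<in> V" "f u = c" and large: "3 * k < 2 * card {v\<in>V. f v = c}"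
  shows "card {v\<in>V. fst u \<noteq> fst v \<and> f v = c} \<le> k"
    and "\<forall>x\<in>{v\<in>V. fst u \<noteq> fst v \<and> f v = c}. \<forall>y\<in>{v\<in>V. fst u \<noteq> fst v \<and> f v = c}. fst x = fst y"
proof -
  show "card {v\<in>V. fst u \<noteq> fst v \<and> f v = c} \<le> k"
    using f u by (auto simp: relaxed_coloring_cmp_adj_iff)
  show "\<forall>x\<in>{v\<in>V. fst u \<noteq> fst v \<and> f v = c}. \<forall>y\<in>{v\<in>V. fst u \<noteq> fst v \<and> f v = c}. fst x = fst y"
  proof (intro ballI, rule ccontr)
    fix x y
    assume "x \<in> {v\<in>V. fst u \<noteq> fst v \<and> f v = c}" "y \<in> {v\<in>V. fst u \<noteq> fst v \<and> f v = c}"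
      and "fst x \<noteq> fst y"
    then have "2 * card {v\<in>V. f v = c} \<le> 3 * k"
      using card_color_class_three_parts[OF f \<open>finite V\<close> u(1), of x y] u(2) by auto
    with large show False by simp
  qed
qed

lemma cmp_adj_sparse_union:
  assumes "finite X" "finite Y" "card X \<le> k" "card Y \<le> k"
    and "\<forall>x\<in>X. \<forall>x'\<in>X. fst x = fst x'" "\<forall>y\<in>Y. \<forall>y'\<in>Y. fst y = fst y'"
  shows "\<forall>u\<in>X \<union> Y. card {v\<in>X \<union> Y. cmp_adj u v} \<le> k"
proof
  fix u assume "u \<in> X \<union> Y"
  then consider "u \<in> X" | "u \<in> Y" by blast
  then show "card {v\<in>X \<union> Y. cmp_adj u v} \<le> k"
  proof cases
    case 1
    then have "{v\<in>X \<union> Y. cmp_adj u v} \<subseteq> Y" using assms(5) unfolding cmp_adj_def by blast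
    then have "card {v\<in>X \<union> Y. cmp_adj u v} \<le> card Y" by (rule card_mono[OF assms(2)])
    then show ?thesis using assms(4) by linarith
  next
    case 2
    then have "{v\<in>X \<union> Y. cmp_adj u v} \<subseteq> X" using assms(6) unfolding cmp_adj_def by blast
    then have "card {v\<in>X \<union> Y. cmp_adj u v} \<le> card X" by (rule card_mono[OF assms(1)])
    then show ?thesis using assms(3) by linarith
  qed
qed

lemma exists_recoloring_avoiding_by_merging:
  assumes f: "relaxed_coloring k V cmp_adj f" and "finite V" and P: "P = {v\<in>V. fst v = j}"
    and a: "a \<in> f ` P" and b: "b \<in> f ` P" and "a \<noteq> b"
    and large: "3 * k < 2 * card {v\<in>V. f v = a}" "3 * k < 2 * card {v\<in>V. f v = b}"
  shows "\<exists>h. relaxed_coloring k (V - P) cmp_adj h \<and> h ` (V - P) \<subseteq> f ` V \<and> a \<notin> h ` (V - P)"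
proof -
  define h where "h v = (if f v = a then b else f v)" for v
  have small: "card {v\<in>V - P. f v = c} \<le> k"
    and one_part: "\<forall>x\<in>{v\<in>V - P. f v = c}. \<forall>y\<in>{v\<in>V - P. f v = c}. fst x = fst y"
    if "u \<in> P" "f u = c" "3 * k < 2 * card {v\<in>V. f v = c}" for u c
  proof -
    have "u \<in> V" using that(1) P by simp
    have outside: "{v\<in>V - P. f v = c} = {v\<in>V. fst u \<noteq> fst v \<and> f v = c}"
      using that(1) P by auto
    show "card {v\<in>V - P. f v = c} \<le> k"
      "\<forall>x\<in>{v\<in>V - P. f v = c}. \<forall>y\<in>{v\<in>V - P. f v = c}. fst x = fst y"
      unfolding outside using large_color_class_outside_part[OF f \<open>finite V\<close> \<open>u \<in> V\<close> that(2,3)]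
      by blast+
  qed
  obtain ua ub where ua: "ua \<in> P" "f ua = a" and ub: "ub \<in> P" "f ub = b"
    using a b by blast
  have sparse: "\<forall>u\<in>{v\<in>V - P. f v = a} \<union> {v\<in>V - P. f v = b}.
      card {v\<in>{v\<in>V - P. f v = a} \<union> {v\<in>V - P. f v = b}. cmp_adj u v} \<le> k"
    by (rule cmp_adj_sparse_union[OF _ _ small[OF ua large(1)] small[OF ub large(2)]
          one_part[OF ua large(1)] one_part[OF ub large(2)]])
      (use \<open>finite V\<close> in auto)
  have "relaxed_coloring k (V - P) cmp_adj f"
    by (rule relaxed_coloring_subset[OF f _ \<open>finite V\<close>]) auto
  then have "relaxed_coloring k (V - P) cmp_adj h"
    unfolding h_def by (rule relaxed_coloring_merge_colors[OF _ sparse]) auto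
  moreover have "h ` (V - P) \<subseteq> f ` V" "a \<notin> h ` (V - P)"
    using b P \<open>a \<noteq> b\<close> by (auto simp: h_def)
  ultimately show ?thesis by blast
qed

lemma two_large_color_classes_meeting_part:
  assumes f: "relaxed_coloring 3 V cmp_adj f" and "finite V" and P: "P = {v\<in>V. fst v = j}"
    and "6 \<le> card P" and shared: "f ` P \<subseteq> f ` (V - P)"
    and many: "4 * (card (f ` P) - 1) < card {v\<in>V - P. f v \<in> f ` P}"
  shows "\<exists>a\<in>f ` P. \<exists>b\<in>f ` P. a \<noteq> b \<and> 4 < card {v\<in>V. f v = a} \<and> 4 < card {v\<in>V. f v = b}"
proof (rule two_elements_exceeding_if_sum_large)
  show "finite (f ` P)" using \<open>finite V\<close> P by simp
  show "\<forall>c\<in>f ` P. card {v\<in>V. f v = c} \<le> 6"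
  proof
    fix c assume "c \<in> f ` P"
    then obtain x where x: "x \<in> V" "fst x = j" "f x = c" using P by blast
    have "c \<in> f ` (V - P)" using shared \<open>c \<in> f ` P\<close> by (rule subsetD)
    then obtain y where "y \<in> V - P" "f y = c" by auto
    then have y: "y \<in> V" "fst y \<noteq> j" "f y = c" using P by auto
    show "card {v\<in>V. f v = c} \<le> 6"
      using card_color_class_two_parts[OF f \<open>finite V\<close> x(1) y(1) x(3) y(3)] x(2) y(2) by simp
  qed
  have "P \<noteq> {}" using \<open>6 \<le> card P\<close> by auto
  then have "1 \<le> card (f ` P)" using \<open>finite (f ` P)\<close> by (simp add: Suc_le_eq card_gt_0_iff)
  have "card (P \<union> {v\<in>V - P. f v \<in> f ` P}) = card P + card {v\<in>V - P. f v \<in> f ` P}"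
    by (rule card_Un_disjoint) (use \<open>finite V\<close> P in auto)
  moreover have "P \<union> {v\<in>V - P. f v \<in> f ` P} = {v\<in>V. f v \<in> f ` P}" using P by auto
  ultimately have "card {v\<in>V. f v \<in> f ` P} = card P + card {v\<in>V - P. f v \<in> f ` P}" by simp
  then show "4 * card (f ` P) + (6 - 4) < (\<Sum>c\<in>f ` P. card {v\<in>V. f v = c})"
    using sum_card_color_classes[OF \<open>finite V\<close> \<open>finite (f ` P)\<close>, of f]
      many \<open>6 \<le> card P\<close> \<open>1 \<le> card (f ` P)\<close> by linarith
qed

lemma exists_relaxed_coloring_constant_on_part:
  assumes f: "relaxed_coloring 3 V cmp_adj f" and "finite V" and P: "P = {v\<in>V. fst v = j}"
    and "6 \<le> card P"
  shows "\<exists>g. relaxed_coloring 3 V cmp_adj g \<and> g ` V \<subseteq> f ` V \<and> card (g ` P) = 1"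
proof -
  have "P \<noteq> {}" using \<open>6 \<le> card P\<close> by auto
  have outside: "relaxed_coloring 3 (V - P) cmp_adj f"
    by (rule relaxed_coloring_subset[OF f _ \<open>finite V\<close>]) auto
  have "\<exists>h a. relaxed_coloring 3 (V - P) cmp_adj h \<and> h ` (V - P) \<subseteq> f ` V
      \<and> a \<in> f ` P \<and> a \<notin> h ` (V - P)"
  proof (cases "f ` P \<subseteq> f ` (V - P)")
    case False
    then show ?thesis using outside by blast
  next
    case shared: True
    show ?thesis
    proof (cases "card {v\<in>V - P. f v \<in> f ` P} \<le> 4 * (card (f ` P) - 1)")
      case True
      obtain a where a: "a \<in> f ` P" using \<open>P \<noteq> {}\<close> by blast
      have "\<forall>u. \<not> cmp_adj u u" by (simp add: cmp_adj_def)
      moreover have "P \<subseteq> V" using P by blast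
      moreover have "card {v\<in>V - P. f v \<in> f ` P} \<le> Suc 3 * (card (f ` P) - 1)"
        using True by simp
      ultimately obtain h where "relaxed_coloring 3 (V - P) cmp_adj h" "h ` (V - P) \<subseteq> f ` V"
        "a \<notin> h ` (V - P)"
        using exists_recoloring_avoiding_by_blocks[OF f \<open>finite V\<close> _ _ a] by blast
      with a show ?thesis by blast
    next
      case False
      then have "4 * (card (f ` P) - 1) < card {v\<in>V - P. f v \<in> f ` P}" by simp
      then obtain a b where ab: "a \<in> f ` P" "b \<in> f ` P" "a \<noteq> b"
        and large: "4 < card {v\<in>V. f v = a}" "4 < card {v\<in>V. f v = b}"
        using two_large_color_classes_meeting_part[OF f \<open>finite V\<close> P \<open>6 \<le> card P\<close> shared]
        by blast
      from large have "3 * 3 < 2 * card {v\<in>V. f v = a}" "3 * 3 < 2 * card {v\<in>V. f v = b}"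
        by simp_all
      then obtain h where "relaxed_coloring 3 (V - P) cmp_adj h" "h ` (V - P) \<subseteq> f ` V"
        "a \<notin> h ` (V - P)"
        using exists_recoloring_avoiding_by_merging[OF f \<open>finite V\<close> P ab] by blast
      with ab(1) show ?thesis by blast
    qed
  qed
  then obtain h a where h: "relaxed_coloring 3 (V - P) cmp_adj h" "h ` (V - P) \<subseteq> f ` V"
    and a: "a \<in> f ` P" "a \<notin> h ` (V - P)"
    by blast
  define g where "g v = (if v \<in> P then a else h v)" for v
  have "\<forall>u\<in>P. \<forall>v\<in>P. \<not> cmp_adj u v" using P by (simp add: cmp_adj_def)
  then have "relaxed_coloring 3 V cmp_adj g"
    unfolding g_def by (rule relaxed_coloring_extend_independent[OF h(1) _ a(2)])
  moreover have "g ` V \<subseteq> f ` V"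
    using h(2) a(1) P by (auto simp: g_def)
  moreover have "g ` P = {a}"
    using \<open>P \<noteq> {}\<close> by (auto simp: g_def)
  ultimately show ?thesis by auto
qed

lemma finite_cmp_vertices: "finite (cmp_vertices s n)"
proof -
  have "cmp_vertices s n = (SIGMA j:{..<s}. {..<n j})" by (auto simp: cmp_vertices_def)
  then show ?thesis by simp
qed

lemma cmp_part_eq: "j < s \<Longrightarrow> cmp_part n j = {v\<in>cmp_vertices s n. fst v = j}"
  by (auto simp: cmp_part_def cmp_vertices_def)

lemma card_cmp_part: "card (cmp_part n j) = n j"
proof -
  have "cmp_part n j = {j} \<times> {..<n j}" by (auto simp: cmp_part_def)
  then show ?thesis by (simp add: card_cartesian_product)
qed

theorem lemma5p1:
  fixes s :: nat and n :: "nat \<Rightarrow> nat"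
  assumes "s \<ge> 2"
    and "\<forall>j<s. n j \<ge> 1"
    and "\<exists>j<s. n j \<ge> 6"
  shows "\<exists>f j. optimal_relaxed_coloring 3 (cmp_vertices s n) cmp_adj f
           \<and> j < s \<and> n j \<ge> 6 \<and> card (f ` cmp_part n j) = 1"
proof -
  obtain j where j: "j < s" "n j \<ge> 6" using assms(3) by blast
  obtain f where f: "optimal_relaxed_coloring 3 (cmp_vertices s n) cmp_adj f"
    using optimal_relaxed_coloring_exists[OF relaxed_coloring_fst] by blast
  moreover have "6 \<le> card (cmp_part n j)" using j(2) by (simp add: card_cmp_part)
  ultimately obtain g where g: "relaxed_coloring 3 (cmp_vertices s n) cmp_adj g"
      "g ` cmp_vertices s n \<subseteq> f ` cmp_vertices s n" "card (g ` cmp_part n j) = 1"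
    using exists_relaxed_coloring_constant_on_part[OF _ finite_cmp_vertices cmp_part_eq[OF j(1)]]
    unfolding optimal_relaxed_coloring_def by blast
  then have "optimal_relaxed_coloring 3 (cmp_vertices s n) cmp_adj g"
    using optimal_relaxed_coloring_if_colors_subset[OF f] finite_cmp_vertices by blast
  then show ?thesis using j g(3) by blast
qed

end
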